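(* Fix $p\in[0,\infty]$. Let $(R_t)_{t=0}^{T-1}$ be a dynamic monetary risk measure and $(U_t)_{t=0}^{T-1}$ a dynamic monetary utility function (both for this $p$), and let $\eta_t\in L^0(\mathcal{F}_t)$ with $\eta_t>0$ for each $t$. (i) For each $t\in\{0,\dots,T-1\}$, the map $$W_t(Y):=R_t(-Y)-\frac{1}{1+\eta_t}U_t\big(\big(R_t(-Y)-Y\big)_+\big)$$ is a mapping from $L^p(\mathcal{F}_{t+1})$ to $L^p(\mathcal{F}_t)$ with the properties: if $\lambda\in L^p(\mathcal{F}_t)$ and $Y\in L^p(\mathcal{F}_{t+1})$ then $W_t(Y+\lambda)=W_t(Y)+\lambda$; if $Y,\widetilde Y\in L^p(\mathcal{F}_{t+1})$ and $Y\le \widetilde Y$ then $W_t(Y)\le W_t(\widetilde Y)$; if $c\in L^p_+(\mathcal{F}_t)$ and $Y\in L^p(\mathcal{F}_{t+1})$ then $W_t(cY)=cW_t(Y)$. (ii) Let $(X_t)_{t=1}^T$ be an $\mathbb{F}$-adapted cash flow with $X_t\in L^p(\mathcal{F}_t)$ for every $t$, and define $V_T(X):=0$ and recursively, for $t=T-1,\dots,0$, with $Y_{t+1}:=X_{t+1}+V_{t+1}(X)$, $$V_t(X):=R_t(-Y_{t+1})-\frac{1}{1+\eta_t}U_t\big(\big(R_t(-Y_{t+1})-Y_{t+1}\big)_+\big).$$ Then for every $t\in\{0,\dots,T-1\}$, $$V_t(X)=W_t\circ\dots\circ W_{T-1}(X_{t+1}+\dots+X_T).$$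
   Context: Let $T\ge 1$ be an integer and $(\Omega,\mathcal{F},\mathbb{F},\mathbb{P})$ a filtered probability space with $\mathbb{F}=(\mathcal{F}_t)_{t=0}^T$ and $\{\emptyset,\Omega\}=\mathcal{F}_0\subseteq\dots\subseteq\mathcal{F}_T=\mathcal{F}$. $L^0(\mathcal{F}_t)$ is the space of real-valued $\mathcal{F}_t$-measurable random variables; for $p\in(0,\infty)$, $L^p(\mathcal{F}_t)=\{Y\in L^0(\mathcal{F}_t):\mathbb{E}|Y|^p<\infty\}$; $L^\infty(\mathcal{F}_t)$ is the space of essentially bounded $\mathcal{F}_t$-measurable random variables; $L^p_+(\mathcal{F}_t)$ denotes the nonnegative elements of $L^p(\mathcal{F}_t)$. Random variables equal a.s. are identified and all (in)equalities are understood $\mathbb{P}$-a.s. $x_+=\max(x,0)$. For $p\in[0,\infty]$, a dynamic monetary risk measure is a sequence of maps $R_t:L^p(\mathcal{F}_{t+1})\to L^p(\mathcal{F}_t)$, $t=0,\dots,T-1$, such that $R_t(Y+\lambda)=R_t(Y)-\lambda$ for $\lambda\in L^p(\mathcal{F}_t)$, $Y\in L^p(\mathcal{F}_{t+1})$; $Y\le\widetilde Y$ implies $R_t(Y)\ge R_t(\widetilde Y)$; and $R_t(cY)=cR_t(Y)$ for $c\in L^p_+(\mathcal{F}_t)$. A dynamic monetary utility function is a sequence of maps $U_t:L^p(\mathcal{F}_{t+1})\to L^p(\mathcal{F}_t)$, $t=0,\dots,T-1$, such that $U_t(Y+\lambda)=U_t(Y)+\lambda$ for $\lambda\in L^p(\mathcal{F}_t)$;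 $Y\le\widetilde Y$ implies $U_t(Y)\le U_t(\widetilde Y)$; and $U_t(cY)=cU_t(Y)$ for $c\in L^p_+(\mathcal{F}_t)$. *)

theory Defs
  imports "HOL-Probability.Probability"
begin

definition filtered_prob_space :: "'a measure \<Rightarrow> (nat \<Rightarrow> 'a measure) \<Rightarrow> nat \<Rightarrow> bool" where
  "filtered_prob_space M F T \<longleftrightarrow>
     prob_space M \<and>
     (\<forall>t\<le>T. space (F t) = space M \<and> sets (F t) \<subseteq> sets M) \<and>
     (\<forall>s t. s \<le> t \<longrightarrow> t \<le> T \<longrightarrow> sets (F s) \<subseteq> sets (F t)) \<and>
     sets (F 0) = {{}, space M} \<and>
     sets (F T) = sets M"

text \<open>L^p(N) for a sub-sigma-algebra N of M, p in [0,infinity]; elements are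
  represented by N-measurable real functions (a.s. identification is handled by
  stating all (in)equalities almost surely).\<close>
definition Lp :: "'a measure \<Rightarrow> 'a measure \<Rightarrow> ennreal \<Rightarrow> ('a \<Rightarrow> real) set" where
  "Lp M N p = {Y \<in> borel_measurable N.
      (if p = 0 then True
       else if p = \<infinity> then (\<exists>C. AE x in M. \<bar>Y x\<bar> \<le> C)
       else (\<integral>\<^sup>+ x. ennreal (\<bar>Y x\<bar> powr enn2real p) \<partial>M) < \<infinity>)}"

definition Lp_plus :: "'a measure \<Rightarrow> 'a measure \<Rightarrow> ennreal \<Rightarrow> ('a \<Rightarrow> real) set" where
  "Lp_plus M N p = {Y \<in> Lp M N p. AE x in M. 0 \<le> Y x}"

definition dyn_risk_measure ::
  "'a measure \<Rightarrow> (nat \<Rightarrow> 'a measure) \<Rightarrow> ennreal \<Rightarrow> nat \<Rightarrow> (nat \<Rightarrow> ('a \<Rightarrow> real) \<Rightarrow> ('a \<Rightarrow> real)) \<Rightarrow> bool" where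
  "dyn_risk_measure M F p T R \<longleftrightarrow> (\<forall>t<T.
     (\<forall>Y\<in>Lp M (F (Suc t)) p. R t Y \<in> Lp M (F t) p) \<and>
     (\<forall>Y\<in>Lp M (F (Suc t)) p. \<forall>l\<in>Lp M (F t) p.
        AE x in M. R t (\<lambda>\<omega>. Y \<omega> + l \<omega>) x = R t Y x - l x) \<and>
     (\<forall>Y\<in>Lp M (F (Suc t)) p. \<forall>Y'\<in>Lp M (F (Suc t)) p.
        (AE x in M. Y x \<le> Y' x) \<longrightarrow> (AE x in M. R t Y' x \<le> R t Y x)) \<and>
     (\<forall>c\<in>Lp_plus M (F t) p. \<forall>Y\<in>Lp M (F (Suc t)) p.
        (\<lambda>\<omega>. c \<omega> * Y \<omega>) \<in> Lp M (F (Suc t)) p \<longrightarrow>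
        (AE x in M. R t (\<lambda>\<omega>. c \<omega> * Y \<omega>) x = c x * R t Y x)))"

definition dyn_utility ::
  "'a measure \<Rightarrow> (nat \<Rightarrow> 'a measure) \<Rightarrow> ennreal \<Rightarrow> nat \<Rightarrow> (nat \<Rightarrow> ('a \<Rightarrow> real) \<Rightarrow> ('a \<Rightarrow> real)) \<Rightarrow> bool" where
  "dyn_utility M F p T U \<longleftrightarrow> (\<forall>t<T.
     (\<forall>Y\<in>Lp M (F (Suc t)) p. U t Y \<in> Lp M (F t) p) \<and>
     (\<forall>Y\<in>Lp M (F (Suc t)) p. \<forall>l\<in>Lp M (F t) p.
        AE x in M. U t (\<lambda>\<omega>. Y \<omega> + l \<omega>) x = U t Y x + l x) \<and>
     (\<forall>Y\<in>Lp M (F (Suc t)) p. \<forall>Y'\<in>Lp M (F (Suc t)) p.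
        (AE x in M. Y x \<le> Y' x) \<longrightarrow> (AE x in M. U t Y x \<le> U t Y' x)) \<and>
     (\<forall>c\<in>Lp_plus M (F t) p. \<forall>Y\<in>Lp M (F (Suc t)) p.
        (\<lambda>\<omega>. c \<omega> * Y \<omega>) \<in> Lp M (F (Suc t)) p \<longrightarrow>
        (AE x in M. U t (\<lambda>\<omega>. c \<omega> * Y \<omega>) x = c x * U t Y x)))"

definition Wmap ::
  "(nat \<Rightarrow> ('a \<Rightarrow> real) \<Rightarrow> ('a \<Rightarrow> real)) \<Rightarrow> (nat \<Rightarrow> ('a \<Rightarrow> real) \<Rightarrow> ('a \<Rightarrow> real)) \<Rightarrow>
   (nat \<Rightarrow> 'a \<Rightarrow> real) \<Rightarrow> nat \<Rightarrow> ('a \<Rightarrow> real) \<Rightarrow> ('a \<Rightarrow> real)" where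
  "Wmap R U \<eta> t Y = (\<lambda>x. R t (\<lambda>\<omega>. - Y \<omega>) x
      - 1 / (1 + \<eta> t x) * U t (\<lambda>\<omega>. max (R t (\<lambda>\<omega>'. - Y \<omega>') \<omega> - Y \<omega>) 0) x)"

definition Vval ::
  "(nat \<Rightarrow> ('a \<Rightarrow> real) \<Rightarrow> ('a \<Rightarrow> real)) \<Rightarrow> (nat \<Rightarrow> ('a \<Rightarrow> real) \<Rightarrow> ('a \<Rightarrow> real)) \<Rightarrow>
   (nat \<Rightarrow> 'a \<Rightarrow> real) \<Rightarrow> nat \<Rightarrow> (nat \<Rightarrow> 'a \<Rightarrow> real) \<Rightarrow> nat \<Rightarrow> ('a \<Rightarrow> real)" where
  "Vval R U \<eta> T X t = foldr
     (\<lambda>s V. let Y = (\<lambda>\<omega>. X (Suc s) \<omega> + V \<omega>) in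
        (\<lambda>x. R s (\<lambda>\<omega>. - Y \<omega>) x
           - 1 / (1 + \<eta> s x) * U s (\<lambda>\<omega>. max (R s (\<lambda>\<omega>'. - Y \<omega>') \<omega> - Y \<omega>) 0) x))
     [t..<T] (\<lambda>x. 0)"

end

theory Submission
  imports Defs
begin

text \<open>With \<open>\<rho>(Y) = R\<^sub>t(-Y)\<close>, the valuation is \<open>W\<^sub>t(Y) = \<rho>(Y) - k U\<^sub>t((\<rho>(Y) - Y)\<^sub>+)\<close> with
  \<open>k = 1/(1+\<eta>\<^sub>t) \<in> (0,1]\<close>. Translating \<open>Y\<close> by \<open>\<lambda>\<close> shifts \<open>\<rho>(Y)\<close> by \<open>\<lambda>\<close> and leaves the
  shortfall \<open>(\<rho>(Y) - Y)\<^sub>+\<close> unchanged, and positive homogeneity passes through \<open>(\<cdot>)\<^sub>+\<close>.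
  For monotonicity, if \<open>Y \<le> Y'\<close> and \<open>d = \<rho>(Y') - \<rho>(Y) \<ge> 0\<close>, the shortfall of \<open>Y'\<close> is at most
  that of \<open>Y\<close> plus \<open>d\<close>, so the utility term grows by at most \<open>k d \<le> d\<close>.
  The recursion for \<open>V\<^sub>t\<close> then unfolds by backward induction: translation invariance of
  \<open>W\<^sub>t \<circ> \<dots> \<circ> W\<^sub>T\<^sub>-\<^sub>1\<close> lets each cash flow \<open>X\<^sub>t\<^sub>+\<^sub>1\<close> be pulled inside the composition.\<close>

lemma abs_add_powr_le:
  fixes a b q :: real
  assumes "0 \<le> q"
  shows "\<bar>a + b\<bar> powr q \<le> 2 powr q * (\<bar>a\<bar> powr q + \<bar>b\<bar> powr q)"
proof -
  have "\<bar>a + b\<bar> powr q \<le> (2 * max \<bar>a\<bar> \<bar>b\<bar>) powr q"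
    using assms by (intro powr_mono2) auto
  also have "\<dots> = 2 powr q * max \<bar>a\<bar> \<bar>b\<bar> powr q"
    by (simp add: powr_mult)
  also have "\<dots> \<le> 2 powr q * (\<bar>a\<bar> powr q + \<bar>b\<bar> powr q)"
    by (intro mult_left_mono) (auto simp: max_def)
  finally show ?thesis .
qed

lemma Lp_measurable: "Y \<in> Lp M N p \<Longrightarrow> Y \<in> borel_measurable N"
  by (simp add: Lp_def)

lemma zero_in_Lp: "(\<lambda>x. 0) \<in> Lp M N p"
  by (auto simp: Lp_def)

lemma Lp_dominated:
  assumes Y: "Y \<in> borel_measurable N" and Z: "Z \<in> Lp M N p"
    and le: "AE x in M. \<bar>Y x\<bar> \<le> \<bar>Z x\<bar>"
  shows "Y \<in> Lp M N p"
proof -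
  consider "p = 0" | "p = \<infinity>" | "p \<noteq> 0" "p \<noteq> \<infinity>" by blast
  then show ?thesis
  proof cases
    case 1
    then show ?thesis using Y by (simp add: Lp_def)
  next
    case 2
    then obtain C where "AE x in M. \<bar>Z x\<bar> \<le> C" using Z by (auto simp: Lp_def)
    with le have "AE x in M. \<bar>Y x\<bar> \<le> C" by eventually_elim simp
    then show ?thesis using Y 2 by (auto simp: Lp_def)
  next
    case 3
    let ?q = "enn2real p"
    have "(\<integral>\<^sup>+ x. ennreal (\<bar>Y x\<bar> powr ?q) \<partial>M) \<le> (\<integral>\<^sup>+ x. ennreal (\<bar>Z x\<bar> powr ?q) \<partial>M)"
      using le by (intro nn_integral_mono_AE, eventually_elim) (auto intro!: ennreal_leI powr_mono2)
    also have "\<dots> < \<infinity>" using Z 3 by (auto simp: Lp_def)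
    finally show ?thesis using Y 3 by (auto simp: Lp_def)
  qed
qed

lemma Lp_uminus: "Y \<in> Lp M N p \<Longrightarrow> (\<lambda>x. - Y x) \<in> Lp M N p"
  by (rule Lp_dominated[of _ _ Y]) (auto simp: Lp_def)

lemma Lp_max_0: "Y \<in> Lp M N p \<Longrightarrow> (\<lambda>x. max (Y x) 0) \<in> Lp M N p"
  by (rule Lp_dominated[of _ _ Y]) (auto simp: Lp_def)

lemma Lp_mult_contraction:
  assumes "k \<in> borel_measurable N" "AE x in M. \<bar>k x\<bar> \<le> 1" "Y \<in> Lp M N p"
  shows "(\<lambda>x. k x * Y x) \<in> Lp M N p"
proof (rule Lp_dominated[OF _ assms(3)])
  show "(\<lambda>x. k x * Y x) \<in> borel_measurable N"
    using assms(1) Lp_measurable[OF assms(3)] by measurable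
  show "AE x in M. \<bar>k x * Y x\<bar> \<le> \<bar>Y x\<bar>"
    using assms(2) by eventually_elim (auto simp: abs_mult intro: mult_left_le_one_le)
qed

lemma Lp_add:
  assumes N: "subalgebra M N" and Y: "Y \<in> Lp M N p" and Z: "Z \<in> Lp M N p"
  shows "(\<lambda>x. Y x + Z x) \<in> Lp M N p"
proof -
  have YN: "Y \<in> borel_measurable N" and ZN: "Z \<in> borel_measurable N"
    using Y Z by (auto simp: Lp_def)
  then have YM: "Y \<in> borel_measurable M" and ZM: "Z \<in> borel_measurable M"
    using measurable_from_subalg[OF N] by auto
  have meas: "(\<lambda>x. Y x + Z x) \<in> borel_measurable N" using YN ZN by measurable
  consider "p = 0" | "p = \<infinity>" | "p \<noteq> 0" "p \<noteq> \<infinity>" by blast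
  then show ?thesis
  proof cases
    case 1
    then show ?thesis using meas by (simp add: Lp_def)
  next
    case 2
    then obtain C D where "AE x in M. \<bar>Y x\<bar> \<le> C" "AE x in M. \<bar>Z x\<bar> \<le> D"
      using Y Z by (auto simp: Lp_def)
    then have "AE x in M. \<bar>Y x + Z x\<bar> \<le> C + D" by eventually_elim simp
    then show ?thesis using meas 2 by (auto simp: Lp_def)
  next
    case 3
    let ?q = "enn2real p" and ?n = "\<lambda>f. \<integral>\<^sup>+ x. ennreal (\<bar>f x\<bar> powr enn2real p) \<partial>M"
    have "?n (\<lambda>x. Y x + Z x) \<le>
          (\<integral>\<^sup>+ x. ennreal (2 powr ?q) * (ennreal (\<bar>Y x\<bar> powr ?q) + ennreal (\<bar>Z x\<bar> powr ?q)) \<partial>M)"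
      by (intro nn_integral_mono)
         (simp add: abs_add_powr_le ennreal_leI flip: ennreal_mult ennreal_plus)
    also have "\<dots> = ennreal (2 powr ?q) * (?n Y + ?n Z)"
      using YM ZM by (simp add: nn_integral_cmult nn_integral_add)
    also have "\<dots> < \<infinity>" using Y Z 3 by (auto simp: Lp_def ennreal_mult_less_top)
    finally show ?thesis using meas 3 by (auto simp: Lp_def)
  qed
qed

lemma Lp_diff:
  "subalgebra M N \<Longrightarrow> Y \<in> Lp M N p \<Longrightarrow> Z \<in> Lp M N p \<Longrightarrow> (\<lambda>x. Y x - Z x) \<in> Lp M N p"
  using Lp_add[OF _ _ Lp_uminus] by fastforce

lemma Lp_mono_sets:
  "space N1 = space N2 \<Longrightarrow> sets N1 \<subseteq> sets N2 \<Longrightarrow> Lp M N1 p \<subseteq> Lp M N2 p"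
  using measurable_from_subalg[of N2 N1] by (auto simp: Lp_def subalgebra_def)

lemma Lp_sum:
  assumes "subalgebra M N" "\<And>i. i \<in> I \<Longrightarrow> f i \<in> Lp M N p"
  shows "(\<lambda>x. \<Sum>i\<in>I. f i x) \<in> Lp M N p"
proof (cases "finite I")
  case True
  then show ?thesis
    using assms(2) by induction (auto simp: zero_in_Lp intro: Lp_add[OF assms(1)])
qed (simp add: zero_in_Lp)

lemma AE_eq_if_mono:
  fixes f :: "('a \<Rightarrow> 'b::order) \<Rightarrow> 'a \<Rightarrow> 'c::order"
  assumes mono: "\<And>Y Y'. Y \<in> A \<Longrightarrow> Y' \<in> A \<Longrightarrow> (AE x in M. Y x \<le> Y' x) \<Longrightarrow>
      (AE x in M. f Y x \<le> f Y' x)"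
    and "Y \<in> A" "Y' \<in> A" "AE x in M. Y x = Y' x"
  shows "AE x in M. f Y x = f Y' x"
proof -
  have "AE x in M. Y x \<le> Y' x" "AE x in M. Y' x \<le> Y x"
    using assms(4) by (eventually_elim, simp)+
  then have "AE x in M. f Y x \<le> f Y' x" "AE x in M. f Y' x \<le> f Y x"
    using mono[OF assms(2,3)] mono[OF assms(3,2)] by blast+
  then show ?thesis by eventually_elim simp
qed

lemma Vval_T: "Vval R U \<eta> T X T = (\<lambda>x. 0)"
  by (simp add: Vval_def)

lemma Vval_step:
  "t < T \<Longrightarrow> Vval R U \<eta> T X t = Wmap R U \<eta> t (\<lambda>\<omega>. X (Suc t) \<omega> + Vval R U \<eta> T X (Suc t) \<omega>)"
  by (simp add: Vval_def upt_conv_Cons Wmap_def Let_def)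

lemma foldr_Wmap_step:
  "t < T \<Longrightarrow> foldr (Wmap R U \<eta>) [t..<T] Z = Wmap R U \<eta> t (foldr (Wmap R U \<eta>) [Suc t..<T] Z)"
  by (simp add: upt_conv_Cons)

locale dynamic_valuation =
  fixes M :: "'a measure" and F :: "nat \<Rightarrow> 'a measure" and T :: nat and p :: ennreal
    and R U :: "nat \<Rightarrow> ('a \<Rightarrow> real) \<Rightarrow> ('a \<Rightarrow> real)" and \<eta> :: "nat \<Rightarrow> 'a \<Rightarrow> real"
  assumes filt: "filtered_prob_space M F T"
    and R: "dyn_risk_measure M F p T R"
    and U: "dyn_utility M F p T U"
    and eta_meas: "\<And>t. t < T \<Longrightarrow> \<eta> t \<in> borel_measurable (F t)"
    and eta_pos: "\<And>t. t < T \<Longrightarrow> AE x in M. 0 < \<eta> t x"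
begin

lemma subalgebra_F: "t \<le> T \<Longrightarrow> subalgebra M (F t)"
  using filt by (auto simp: filtered_prob_space_def subalgebra_def)

lemma Lp_F_mono: "s \<le> t \<Longrightarrow> t \<le> T \<Longrightarrow> Lp M (F s) p \<subseteq> Lp M (F t) p"
  using filt by (intro Lp_mono_sets) (auto simp: filtered_prob_space_def)

lemma Lp_F_Suc: "t < T \<Longrightarrow> Y \<in> Lp M (F t) p \<Longrightarrow> Y \<in> Lp M (F (Suc t)) p"
  using Lp_F_mono[of t "Suc t"] by auto

lemma Lp_F_add:
  "t \<le> T \<Longrightarrow> Y \<in> Lp M (F t) p \<Longrightarrow> Z \<in> Lp M (F t) p \<Longrightarrow> (\<lambda>x. Y x + Z x) \<in> Lp M (F t) p"
  by (rule Lp_add[OF subalgebra_F])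

lemma Lp_F_diff:
  "t \<le> T \<Longrightarrow> Y \<in> Lp M (F t) p \<Longrightarrow> Z \<in> Lp M (F t) p \<Longrightarrow> (\<lambda>x. Y x - Z x) \<in> Lp M (F t) p"
  by (rule Lp_diff[OF subalgebra_F])

lemma R_Lp: "t < T \<Longrightarrow> Y \<in> Lp M (F (Suc t)) p \<Longrightarrow> R t Y \<in> Lp M (F t) p"
  and R_translation: "t < T \<Longrightarrow> Y \<in> Lp M (F (Suc t)) p \<Longrightarrow> l \<in> Lp M (F t) p \<Longrightarrow>
        AE x in M. R t (\<lambda>\<omega>. Y \<omega> + l \<omega>) x = R t Y x - l x"
  and R_antimono: "t < T \<Longrightarrow> Y \<in> Lp M (F (Suc t)) p \<Longrightarrow> Y' \<in> Lp M (F (Suc t)) p \<Longrightarrow>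
        (AE x in M. Y x \<le> Y' x) \<Longrightarrow> (AE x in M. R t Y' x \<le> R t Y x)"
  and R_homogeneous: "t < T \<Longrightarrow> c \<in> Lp_plus M (F t) p \<Longrightarrow> Y \<in> Lp M (F (Suc t)) p \<Longrightarrow>
        (\<lambda>\<omega>. c \<omega> * Y \<omega>) \<in> Lp M (F (Suc t)) p \<Longrightarrow>
        (AE x in M. R t (\<lambda>\<omega>. c \<omega> * Y \<omega>) x = c x * R t Y x)"
  using R unfolding dyn_risk_measure_def by blast+

lemma U_Lp: "t < T \<Longrightarrow> Y \<in> Lp M (F (Suc t)) p \<Longrightarrow> U t Y \<in> Lp M (F t) p"
  and U_translation: "t < T \<Longrightarrow> Y \<in> Lp M (F (Suc t)) p \<Longrightarrow> l \<in> Lp M (F t) p \<Longrightarrow>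
        AE x in M. U t (\<lambda>\<omega>. Y \<omega> + l \<omega>) x = U t Y x + l x"
  and U_mono: "t < T \<Longrightarrow> Y \<in> Lp M (F (Suc t)) p \<Longrightarrow> Y' \<in> Lp M (F (Suc t)) p \<Longrightarrow>
        (AE x in M. Y x \<le> Y' x) \<Longrightarrow> (AE x in M. U t Y x \<le> U t Y' x)"
  and U_homogeneous: "t < T \<Longrightarrow> c \<in> Lp_plus M (F t) p \<Longrightarrow> Y \<in> Lp M (F (Suc t)) p \<Longrightarrow>
        (\<lambda>\<omega>. c \<omega> * Y \<omega>) \<in> Lp M (F (Suc t)) p \<Longrightarrow>
        (AE x in M. U t (\<lambda>\<omega>. c \<omega> * Y \<omega>) x = c x * U t Y x)"
  using U unfolding dyn_utility_def by blast+

lemma U_AE_cong: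
  "t < T \<Longrightarrow> Y \<in> Lp M (F (Suc t)) p \<Longrightarrow> Y' \<in> Lp M (F (Suc t)) p \<Longrightarrow>
    (AE x in M. Y x = Y' x) \<Longrightarrow> AE x in M. U t Y x = U t Y' x"
  by (rule AE_eq_if_mono[OF U_mono])

definition capital :: "nat \<Rightarrow> ('a \<Rightarrow> real) \<Rightarrow> 'a \<Rightarrow> real"
  where "capital t Y = R t (\<lambda>\<omega>. - Y \<omega>)"

definition shortfall :: "nat \<Rightarrow> ('a \<Rightarrow> real) \<Rightarrow> 'a \<Rightarrow> real"
  where "shortfall t Y = (\<lambda>\<omega>. max (capital t Y \<omega> - Y \<omega>) 0)"

definition weight :: "nat \<Rightarrow> 'a \<Rightarrow> real"
  where "weight t x = 1 / (1 + \<eta> t x)"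

lemma Wmap_eq: "Wmap R U \<eta> t Y = (\<lambda>x. capital t Y x - weight t x * U t (shortfall t Y) x)"
  by (simp add: Wmap_def capital_def shortfall_def weight_def)

lemma weight_measurable: "t < T \<Longrightarrow> weight t \<in> borel_measurable (F t)"
  unfolding weight_def using eta_meas by measurable

lemma weight_bounds:
  assumes "t < T" shows "AE x in M. 0 < weight t x \<and> weight t x \<le> 1"
  using eta_pos[OF assms] by eventually_elim (simp add: weight_def)

lemma capital_Lp: "t < T \<Longrightarrow> Y \<in> Lp M (F (Suc t)) p \<Longrightarrow> capital t Y \<in> Lp M (F t) p"
  unfolding capital_def by (intro R_Lp Lp_uminus)

lemma shortfall_Lp: "t < T \<Longrightarrow> Y \<in> Lp M (F (Suc t)) p \<Longrightarrow> shortfall t Y \<in> Lp M (F (Suc t)) p"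
  unfolding shortfall_def by (intro Lp_max_0 Lp_F_diff[OF _ Lp_F_Suc[OF _ capital_Lp]]) auto

lemma Wmap_Lp:
  assumes t: "t < T" and Y: "Y \<in> Lp M (F (Suc t)) p"
  shows "Wmap R U \<eta> t Y \<in> Lp M (F t) p"
proof -
  have "(\<lambda>x. weight t x * U t (shortfall t Y) x) \<in> Lp M (F t) p"
    using weight_bounds[OF t]
    by (intro Lp_mult_contraction weight_measurable U_Lp shortfall_Lp t Y) auto
  then show ?thesis
    unfolding Wmap_eq using t by (intro Lp_F_diff capital_Lp Y) auto
qed

lemma Wmap_translation:
  assumes t: "t < T" and Y: "Y \<in> Lp M (F (Suc t)) p" and l: "l \<in> Lp M (F t) p"
  shows "AE x in M. Wmap R U \<eta> t (\<lambda>\<omega>. Y \<omega> + l \<omega>) x = Wmap R U \<eta> t Y x + l x"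
proof -
  have Yl: "(\<lambda>\<omega>. Y \<omega> + l \<omega>) \<in> Lp M (F (Suc t)) p"
    using t Y Lp_F_Suc[OF t l] by (intro Lp_F_add) auto
  have capital: "AE x in M. capital t (\<lambda>\<omega>. Y \<omega> + l \<omega>) x = capital t Y x + l x"
    using R_translation[OF t Lp_uminus[OF Y] Lp_uminus[OF l]] by (simp add: capital_def)
  then have "AE x in M. shortfall t (\<lambda>\<omega>. Y \<omega> + l \<omega>) x = shortfall t Y x"
    by eventually_elim (simp add: shortfall_def)
  then have "AE x in M. U t (shortfall t (\<lambda>\<omega>. Y \<omega> + l \<omega>)) x = U t (shortfall t Y) x"
    by (intro U_AE_cong t shortfall_Lp Yl Y)
  with capital show ?thesis
    unfolding Wmap_eq by eventually_elim simp
qed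

lemma Wmap_mono:
  assumes t: "t < T" and Y: "Y \<in> Lp M (F (Suc t)) p" and Y': "Y' \<in> Lp M (F (Suc t)) p"
    and le: "AE x in M. Y x \<le> Y' x"
  shows "AE x in M. Wmap R U \<eta> t Y x \<le> Wmap R U \<eta> t Y' x"
proof -
  define d where "d x = capital t Y' x - capital t Y x" for x
  have d: "d \<in> Lp M (F t) p"
    unfolding d_def using t by (intro Lp_F_diff capital_Lp Y Y') auto
  have d_nonneg: "AE x in M. 0 \<le> d x"
    using R_antimono[OF t Lp_uminus[OF Y'] Lp_uminus[OF Y]] le
    by (auto simp: d_def capital_def)
  have "AE x in M. shortfall t Y' x \<le> shortfall t Y x + d x"
    using le d_nonneg by eventually_elim (auto simp: shortfall_def d_def)
  then have "AE x in M. U t (shortfall t Y') x \<le> U t (\<lambda>\<omega>. shortfall t Y \<omega> + d \<omega>) x"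
    using t by (intro U_mono shortfall_Lp Lp_F_add[OF _ shortfall_Lp[OF t Y] Lp_F_Suc[OF t d]] Y') auto
  moreover have "AE x in M. U t (\<lambda>\<omega>. shortfall t Y \<omega> + d \<omega>) x = U t (shortfall t Y) x + d x"
    by (rule U_translation[OF t shortfall_Lp[OF t Y] d])
  ultimately show ?thesis
    using d_nonneg weight_bounds[OF t] unfolding Wmap_eq
  proof eventually_elim
    case (elim x)
    let ?k = "weight t x"
    have "?k * U t (shortfall t Y') x \<le> ?k * U t (shortfall t Y) x + ?k * d x"
      using elim by (simp add: mult_left_mono flip: distrib_left)
    moreover have "?k * d x \<le> d x"
      using elim by (intro mult_left_le_one_le) auto
    ultimately show ?case by (simp add: d_def)
  qed
qed

lemma Wmap_AE_cong:
  "t < T \<Longrightarrow> Y \<in> Lp M (F (Suc t)) p \<Longrightarrow> Y' \<in> Lp M (F (Suc t)) p \<Longrightarrow>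
    (AE x in M. Y x = Y' x) \<Longrightarrow> AE x in M. Wmap R U \<eta> t Y x = Wmap R U \<eta> t Y' x"
  by (rule AE_eq_if_mono[OF Wmap_mono])

lemma Wmap_homogeneous:
  assumes t: "t < T" and c: "c \<in> Lp_plus M (F t) p" and Y: "Y \<in> Lp M (F (Suc t)) p"
    and cY: "(\<lambda>\<omega>. c \<omega> * Y \<omega>) \<in> Lp M (F (Suc t)) p"
  shows "AE x in M. Wmap R U \<eta> t (\<lambda>\<omega>. c \<omega> * Y \<omega>) x = c x * Wmap R U \<eta> t Y x"
proof -
  have c_Lp: "c \<in> Lp M (F t) p" and c_nonneg: "AE x in M. 0 \<le> c x"
    using c by (auto simp: Lp_plus_def)
  have neg_cY: "(\<lambda>\<omega>. - (c \<omega> * Y \<omega>)) = (\<lambda>\<omega>. c \<omega> * (- Y \<omega>))" by simp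
  have capital: "AE x in M. capital t (\<lambda>\<omega>. c \<omega> * Y \<omega>) x = c x * capital t Y x"
    using Lp_uminus[OF cY] unfolding capital_def neg_cY by (rule R_homogeneous[OF t c Lp_uminus[OF Y]])
  have shortfall: "AE x in M. shortfall t (\<lambda>\<omega>. c \<omega> * Y \<omega>) x = c x * shortfall t Y x"
    using capital c_nonneg
    by eventually_elim (simp add: shortfall_def max_mult_distrib_left right_diff_distrib)
  have c_shortfall: "(\<lambda>x. c x * shortfall t Y x) \<in> Lp M (F (Suc t)) p"
  proof (rule Lp_dominated[OF _ shortfall_Lp[OF t cY]])
    show "(\<lambda>x. c x * shortfall t Y x) \<in> borel_measurable (F (Suc t))"
      using Lp_measurable[OF Lp_F_Suc[OF t c_Lp]] Lp_measurable[OF shortfall_Lp[OF t Y]]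
      by measurable
    show "AE x in M. \<bar>c x * shortfall t Y x\<bar> \<le> \<bar>shortfall t (\<lambda>\<omega>. c \<omega> * Y \<omega>) x\<bar>"
      using shortfall by eventually_elim simp
  qed
  have "AE x in M. U t (shortfall t (\<lambda>\<omega>. c \<omega> * Y \<omega>)) x = U t (\<lambda>x. c x * shortfall t Y x) x"
    by (rule U_AE_cong[OF t shortfall_Lp[OF t cY] c_shortfall shortfall])
  moreover have "AE x in M. U t (\<lambda>x. c x * shortfall t Y x) x = c x * U t (shortfall t Y) x"
    by (rule U_homogeneous[OF t c shortfall_Lp[OF t Y] c_shortfall])
  ultimately show ?thesis
    using capital unfolding Wmap_eq by eventually_elim (simp add: algebra_simps)
qed

lemma foldr_Wmap_Lp:
  assumes "t \<le> T" "Z \<in> Lp M (F T) p"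
  shows "foldr (Wmap R U \<eta>) [t..<T] Z \<in> Lp M (F t) p"
  using assms(1)
proof (induction rule: inc_induct)
  case base
  then show ?case using assms(2) by simp
next
  case (step s)
  then show ?case by (simp add: foldr_Wmap_step Wmap_Lp)
qed

lemma foldr_Wmap_translation:
  assumes "t \<le> T" "Z \<in> Lp M (F T) p" "l \<in> Lp M (F t) p"
  shows "AE x in M. foldr (Wmap R U \<eta>) [t..<T] (\<lambda>\<omega>. Z \<omega> + l \<omega>) x
    = foldr (Wmap R U \<eta>) [t..<T] Z x + l x"
  using assms(1,3)
proof (induction rule: inc_induct)
  case base
  then show ?case by simp
next
  case (step s)
  let ?G = "\<lambda>Z. foldr (Wmap R U \<eta>) [Suc s..<T] Z"
  have l: "l \<in> Lp M (F (Suc s)) p" using Lp_F_Suc step by blast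
  have lT: "l \<in> Lp M (F T) p" using Lp_F_mono[of s T] step by auto
  then have Zl: "(\<lambda>\<omega>. Z \<omega> + l \<omega>) \<in> Lp M (F T) p" using assms(2) by (intro Lp_F_add) auto
  have GZ: "?G Z \<in> Lp M (F (Suc s)) p" using step assms(2) by (intro foldr_Wmap_Lp) auto
  have "AE x in M. Wmap R U \<eta> s (?G (\<lambda>\<omega>. Z \<omega> + l \<omega>)) x = Wmap R U \<eta> s (\<lambda>\<omega>. ?G Z \<omega> + l \<omega>) x"
    using step l Zl GZ by (intro Wmap_AE_cong foldr_Wmap_Lp[OF _ Zl] Lp_F_add) auto
  moreover have "AE x in M. Wmap R U \<eta> s (\<lambda>\<omega>. ?G Z \<omega> + l \<omega>) x = Wmap R U \<eta> s (?G Z) x + l x"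
    using step GZ by (intro Wmap_translation) auto
  ultimately show ?case
    unfolding foldr_Wmap_step[OF \<open>s < T\<close>] by eventually_elim simp
qed

lemma Vval_eq_foldr_Wmap:
  assumes X: "\<And>s. s \<in> {1..T} \<Longrightarrow> X s \<in> Lp M (F s) p" and t: "t \<le> T"
  shows "Vval R U \<eta> T X t \<in> Lp M (F t) p \<and>
    (AE x in M. Vval R U \<eta> T X t x = foldr (Wmap R U \<eta>) [t..<T] (\<lambda>\<omega>. \<Sum>s\<in>{Suc t..T}. X s \<omega>) x)"
  using t
proof (induction rule: inc_induct)
  case base
  show ?case by (simp add: Vval_T zero_in_Lp)
next
  case (step s)
  let ?V = "Vval R U \<eta> T X" and ?S = "\<lambda>t \<omega>. \<Sum>r\<in>{Suc t..T}. X r \<omega>"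
  let ?G = "foldr (Wmap R U \<eta>) [Suc s..<T]"
  have X_Suc: "X (Suc s) \<in> Lp M (F (Suc s)) p" using X step by auto
  have S_Lp: "?S r \<in> Lp M (F T) p" for r
    using X Lp_F_mono by (intro Lp_sum subalgebra_F) (auto simp: subset_iff)
  have "AE x in M. ?G (\<lambda>\<omega>. ?S (Suc s) \<omega> + X (Suc s) \<omega>) x = ?G (?S (Suc s)) x + X (Suc s) x"
    using step X_Suc by (intro foldr_Wmap_translation S_Lp) auto
  moreover have "?S s = (\<lambda>\<omega>. ?S (Suc s) \<omega> + X (Suc s) \<omega>)"
    using step by (simp add: sum.atLeast_Suc_atMost add.commute)
  ultimately have eq: "AE x in M. X (Suc s) x + ?V (Suc s) x = ?G (?S s) x"
    using step.IH by auto
  have XV: "(\<lambda>\<omega>. X (Suc s) \<omega> + ?V (Suc s) \<omega>) \<in> Lp M (F (Suc s)) p"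
    using step X_Suc by (intro Lp_F_add) auto
  have "?G (?S s) \<in> Lp M (F (Suc s)) p"
    using step by (intro foldr_Wmap_Lp S_Lp) auto
  then have "AE x in M. ?V s x = foldr (Wmap R U \<eta>) [s..<T] (?S s) x"
    unfolding Vval_step[OF \<open>s < T\<close>] foldr_Wmap_step[OF \<open>s < T\<close>]
    by (rule Wmap_AE_cong[OF \<open>s < T\<close> XV _ eq])
  moreover have "?V s \<in> Lp M (F s) p"
    unfolding Vval_step[OF \<open>s < T\<close>] by (rule Wmap_Lp[OF \<open>s < T\<close> XV])
  ultimately show ?case by blast
qed

end

theorem proposition1:
  fixes M :: "'a measure" and F :: "nat \<Rightarrow> 'a measure" and T :: nat and p :: ennreal
    and R U :: "nat \<Rightarrow> ('a \<Rightarrow> real) \<Rightarrow> ('a \<Rightarrow> real)" and \<eta> :: "nat \<Rightarrow> 'a \<Rightarrow> real"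
  assumes T: "1 \<le> T"
    and filt: "filtered_prob_space M F T"
    and R: "dyn_risk_measure M F p T R"
    and U: "dyn_utility M F p T U"
    and eta_meas: "\<And>t. t < T \<Longrightarrow> \<eta> t \<in> borel_measurable (F t)"
    and eta_pos: "\<And>t. t < T \<Longrightarrow> AE x in M. 0 < \<eta> t x"
  shows
    "(\<forall>t<T.
        (\<forall>Y\<in>Lp M (F (Suc t)) p. Wmap R U \<eta> t Y \<in> Lp M (F t) p) \<and>
        (\<forall>Y\<in>Lp M (F (Suc t)) p. \<forall>l\<in>Lp M (F t) p.
           AE x in M. Wmap R U \<eta> t (\<lambda>\<omega>. Y \<omega> + l \<omega>) x = Wmap R U \<eta> t Y x + l x) \<and>
        (\<forall>Y\<in>Lp M (F (Suc t)) p. \<forall>Y'\<in>Lp M (F (Suc t)) p.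
           (AE x in M. Y x \<le> Y' x) \<longrightarrow> (AE x in M. Wmap R U \<eta> t Y x \<le> Wmap R U \<eta> t Y' x)) \<and>
        (\<forall>c\<in>Lp_plus M (F t) p. \<forall>Y\<in>Lp M (F (Suc t)) p.
           (\<lambda>\<omega>. c \<omega> * Y \<omega>) \<in> Lp M (F (Suc t)) p \<longrightarrow>
           (AE x in M. Wmap R U \<eta> t (\<lambda>\<omega>. c \<omega> * Y \<omega>) x = c x * Wmap R U \<eta> t Y x)))
     \<and>
     (\<forall>X :: nat \<Rightarrow> 'a \<Rightarrow> real. (\<forall>s\<in>{1..T}. X s \<in> Lp M (F s) p) \<longrightarrow>
        (\<forall>t<T. AE x in M. Vval R U \<eta> T X t x =
            foldr (Wmap R U \<eta>) [t..<T] (\<lambda>\<omega>. \<Sum>s\<in>{Suc t..T}. X s \<omega>) x))"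
proof -
  interpret dynamic_valuation M F T p R U \<eta>
    using filt R U eta_meas eta_pos by unfold_locales auto
  show ?thesis
    using Wmap_Lp Wmap_translation Wmap_mono Wmap_homogeneous Vval_eq_foldr_Wmap by auto
qed

end
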